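(* Let $G$ be a graph on $n$ vertices with at least one edge that is both vertex-transitive and edge-transitive, and let $\lambda_1(G)$ and $\lambda_n(G)$ be the largest and smallest eigenvalues of its adjacency matrix. Then $\chi_v(G)=1-\frac{\lambda_1(G)}{\lambda_n(G)}=\chi_{sv}(G)$.
   Context: Graphs are finite, simple, undirected. Vertex-/edge-transitive means the automorphism group acts transitively on vertices/edges. For a graph on $n$ vertices with at least one edge, a vector $t$-coloring ($t\ge2$) assigns unit vectors $u_i\in\mathbb R^n$ to vertices with $u_i^{\mathrm T}u_j\le-\frac1{t-1}$ for every edge $\{i,j\}$, and a strict vector $t$-coloring requires equality on every edge; $\chi_v$ and $\chi_{sv}$ are the smallest $t\ge2$ admitting a vector, resp. strict vector, $t$-coloring. *)

theory Defs
  imports "HOL-Analysis.Analysis"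
begin

text \<open>A finite simple graph whose vertex set is the finite type 'a (so n = CARD('a)),
  given by a symmetric irreflexive adjacency relation E.\<close>

definition simple_graph :: "('a::finite \<Rightarrow> 'a \<Rightarrow> bool) \<Rightarrow> bool" where
  "simple_graph E \<longleftrightarrow> (\<forall>x y. E x y \<longrightarrow> E y x) \<and> (\<forall>x. \<not> E x x)"

definition graph_aut :: "('a \<Rightarrow> 'a \<Rightarrow> bool) \<Rightarrow> ('a \<Rightarrow> 'a) \<Rightarrow> bool" where
  "graph_aut E f \<longleftrightarrow> bij f \<and> (\<forall>x y. E x y \<longleftrightarrow> E (f x) (f y))"

definition vertex_transitive :: "('a \<Rightarrow> 'a \<Rightarrow> bool) \<Rightarrow> bool" where
  "vertex_transitive E \<longleftrightarrow> (\<forall>x y. \<exists>f. graph_aut E f \<and> f x = y)"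

definition edge_transitive :: "('a \<Rightarrow> 'a \<Rightarrow> bool) \<Rightarrow> bool" where
  "edge_transitive E \<longleftrightarrow>
     (\<forall>x y u v. E x y \<longrightarrow> E u v \<longrightarrow> (\<exists>f. graph_aut E f \<and> {f x, f y} = {u, v}))"

definition adj_matrix :: "('a::finite \<Rightarrow> 'a \<Rightarrow> bool) \<Rightarrow> real^'a^'a" where
  "adj_matrix E = (\<chi> i j. if E i j then 1 else 0)"

definition eigenvalues :: "real^'n^'n \<Rightarrow> real set" where
  "eigenvalues A = {c. \<exists>v. v \<noteq> 0 \<and> A *v v = c *\<^sub>R v}"

definition lambda_max :: "('a::finite \<Rightarrow> 'a \<Rightarrow> bool) \<Rightarrow> real" where
  "lambda_max E = Max (eigenvalues (adj_matrix E))"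

definition lambda_min :: "('a::finite \<Rightarrow> 'a \<Rightarrow> bool) \<Rightarrow> real" where
  "lambda_min E = Min (eigenvalues (adj_matrix E))"

definition vector_coloring :: "('a::finite \<Rightarrow> 'a \<Rightarrow> bool) \<Rightarrow> real \<Rightarrow> ('a \<Rightarrow> real^'a) \<Rightarrow> bool" where
  "vector_coloring E t u \<longleftrightarrow> (\<forall>i. norm (u i) = 1) \<and>
     (\<forall>i j. E i j \<longrightarrow> u i \<bullet> u j \<le> - 1 / (t - 1))"

definition strict_vector_coloring :: "('a::finite \<Rightarrow> 'a \<Rightarrow> bool) \<Rightarrow> real \<Rightarrow> ('a \<Rightarrow> real^'a) \<Rightarrow> bool" where
  "strict_vector_coloring E t u \<longleftrightarrow> (\<forall>i. norm (u i) = 1) \<and>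
     (\<forall>i j. E i j \<longrightarrow> u i \<bullet> u j = - 1 / (t - 1))"

definition vector_chromatic :: "('a::finite \<Rightarrow> 'a \<Rightarrow> bool) \<Rightarrow> real" where
  "vector_chromatic E = Inf {t. t \<ge> 2 \<and> (\<exists>u. vector_coloring E t u)}"

definition strict_vector_chromatic :: "('a::finite \<Rightarrow> 'a \<Rightarrow> bool) \<Rightarrow> real" where
  "strict_vector_chromatic E = Inf {t. t \<ge> 2 \<and> (\<exists>u. strict_vector_coloring E t u)}"

end

theory Submission
  imports Defs
begin

(* A vertex-transitive graph is d-regular, so lambda_1 = d, and lambda_n is the minimum of the
   Rayleigh quotient of the adjacency matrix A.

   Lower bound: for a vector colouring u with parameter t, apply lambda_n |y|^2 <= y^T A y to the
   coordinate slices y_k = (u_i $ k)_i and add up; this gives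
   n lambda_n <= sum_ij A_ij u_i.u_j <= - n d / (t - 1), i.e. t >= 1 - d / lambda_n.

   Upper bound: average a unit eigenvector x for lambda_n over the automorphism group, i.e. take
   w_i = (x (f i))_(f in Aut).  The Gram matrix of the w_i is Aut-invariant, so by vertex- and
   edge-transitivity |w_i|^2 = alpha and w_i.w_j = beta on edges; the traces
   sum_i |w_i|^2 = |Aut| and sum_ij A_ij w_i.w_j = |Aut| lambda_n force beta / alpha = lambda_n / d.
   The w_i span at most n dimensions, so after rescaling they are realised by unit vectors in R^n
   forming a strict vector colouring with parameter 1 - d / lambda_n. *)

section \<open>Rayleigh quotients of symmetric matrices\<close>

lemma inner_matrix_vector_mult:
  fixes A :: "real^'n^'m"
  shows "x \<bullet> (A *v y) = (\<Sum>i\<in>UNIV. \<Sum>j\<in>UNIV. A $ i $ j * (x $ i * y $ j))"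
  by (simp add: inner_vec_def matrix_vector_mult_def sum_distrib_left algebra_simps)

lemma inner_matrix_vector_mult_symmetric:
  fixes A :: "real^'n^'n"
  assumes "transpose A = A"
  shows "y \<bullet> (A *v x) = x \<bullet> (A *v y)"
  by (metis assms dot_lmul_matrix inner_commute vector_transpose_matrix)

lemma norm_vec_power2: "(norm x)\<^sup>2 = (\<Sum>i\<in>UNIV. (x $ i)\<^sup>2)"
  unfolding power2_norm_eq_inner by (simp add: inner_vec_def power2_eq_square)

lemma quadratic_form_scaleR:
  fixes A :: "real^'n^'n"
  shows "(c *\<^sub>R x) \<bullet> (A *v (c *\<^sub>R x)) = c\<^sup>2 * (x \<bullet> (A *v x))"
  by (simp add: matrix_vector_mult_scaleR power2_eq_square)

lemma eigenvalue_rayleigh_quotient: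
  fixes A :: "real^'n^'n"
  assumes "c \<in> eigenvalues A"
  obtains v where "norm v = 1" "v \<bullet> (A *v v) = c"
proof -
  obtain v where v: "v \<noteq> 0" "A *v v = c *\<^sub>R v"
    using assms unfolding eigenvalues_def by blast
  define v1 where "v1 = (1 / norm v) *\<^sub>R v"
  have "norm v1 = 1" using v(1) by (simp add: v1_def)
  moreover have "v1 \<bullet> (A *v v1) = c"
    using v \<open>norm v1 = 1\<close>
    by (simp add: v1_def matrix_vector_mult_scaleR power2_norm_eq_inner[symmetric] power2_eq_square field_simps)
  ultimately show ?thesis by (rule that)
qed

lemma finite_eigenvalues_symmetric:
  fixes A :: "real^'n^'n"
  assumes sym: "transpose A = A"
  shows "finite (eigenvalues A)"
proof -
  define ev where "ev c = (SOME v. v \<noteq> 0 \<and> A *v v = c *\<^sub>R v)" for c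
  have ev: "ev c \<noteq> 0 \<and> A *v ev c = c *\<^sub>R ev c" if "c \<in> eigenvalues A" for c
    using that unfolding eigenvalues_def mem_Collect_eq ev_def by (rule someI_ex)
  have orth: "ev c \<bullet> ev c' = 0"
    if "c \<in> eigenvalues A" "c' \<in> eigenvalues A" "c \<noteq> c'" for c c'
  proof -
    have "c * (ev c \<bullet> ev c') = ev c' \<bullet> (A *v ev c)"
      using ev[OF that(1)] by (simp add: inner_commute)
    also have "\<dots> = ev c \<bullet> (A *v ev c')" by (rule inner_matrix_vector_mult_symmetric[OF sym])
    also have "\<dots> = c' * (ev c \<bullet> ev c')" using ev[OF that(2)] by simp
    finally show ?thesis using that(3) by auto
  qed
  have "inj_on ev (eigenvalues A)"
    by (rule inj_onI) (metis ev orth inner_eq_zero_iff)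
  moreover have "independent (ev ` eigenvalues A)"
    by (rule pairwise_orthogonal_independent) (use ev orth in \<open>auto simp: pairwise_def orthogonal_def\<close>)
  ultimately show ?thesis using finiteI_independent finite_imageD by blast
qed

lemma nonneg_quadratic_in_scalar_imp_zero:
  fixes b q :: real
  assumes "\<And>s. 0 \<le> s\<^sup>2 * q - 2 * s * b" "0 \<le> q"
  shows "b = 0"
proof -
  have "0 \<le> (b / (q + 1))\<^sup>2 * q - 2 * (b / (q + 1)) * b" by (rule assms(1))
  also have "\<dots> = - (b\<^sup>2 * (q + 2)) / (q + 1)\<^sup>2"
    using assms(2) by (simp add: divide_simps) (simp add: algebra_simps power2_eq_square)
  finally have "b\<^sup>2 * (q + 2) \<le> 0"
    using assms(2) by (simp add: divide_le_0_iff)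
  then show ?thesis
    using assms(2) by (smt (verit) mult_pos_pos zero_less_power2)
qed

lemma rayleigh_minimizer_eigenvector:
  fixes A :: "real^'n^'n"
  assumes sym: "transpose A = A" and x0: "norm x0 = 1"
    and min: "\<And>x. (x0 \<bullet> (A *v x0)) * (norm x)\<^sup>2 \<le> x \<bullet> (A *v x)"
  shows "A *v x0 = (x0 \<bullet> (A *v x0)) *\<^sub>R x0"
proof -
  define m where "m = x0 \<bullet> (A *v x0)"
  define r where "r = A *v x0 - m *\<^sub>R x0"
  \<comment> \<open>perturbing \<open>x0\<close> along the residual \<open>r\<close> lowers the Rayleigh quotient to first order unless \<open>r = 0\<close>\<close>
  have r_x0: "r \<bullet> x0 = 0"
    using x0 by (simp add: r_def m_def inner_diff_left inner_diff_right inner_commute norm_eq_1)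
  have r_Ax0: "r \<bullet> (A *v x0) = r \<bullet> r"
    using r_x0 by (simp add: r_def inner_diff_right)
  have "0 \<le> s\<^sup>2 * (r \<bullet> (A *v r) - m * (norm r)\<^sup>2) - 2 * s * (r \<bullet> r)" for s
  proof -
    let ?z = "x0 - s *\<^sub>R r"
    have "?z \<bullet> (A *v ?z) = m - 2 * s * (r \<bullet> (A *v x0)) + s\<^sup>2 * (r \<bullet> (A *v r))"
      using inner_matrix_vector_mult_symmetric[OF sym, of x0 r]
      by (simp add: m_def algebra_simps power2_eq_square)
    moreover have "(norm ?z)\<^sup>2 = 1 + s\<^sup>2 * (norm r)\<^sup>2"
      using x0 r_x0 unfolding power2_norm_eq_inner
      by (simp add: inner_diff_left inner_diff_right inner_commute norm_eq_1 power2_eq_square)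
    ultimately show ?thesis
      using min[of ?z] r_Ax0 by (simp add: m_def algebra_simps)
  qed
  moreover have "0 \<le> r \<bullet> (A *v r) - m * (norm r)\<^sup>2"
    using min[of r] by (simp add: m_def)
  ultimately have "r \<bullet> r = 0"
    by (rule nonneg_quadratic_in_scalar_imp_zero)
  then show ?thesis by (simp add: r_def m_def)
qed

lemma rayleigh_minimizer_exists:
  fixes A :: "real^'n^'n"
  obtains x0 where "norm x0 = 1" "\<And>x. (x0 \<bullet> (A *v x0)) * (norm x)\<^sup>2 \<le> x \<bullet> (A *v x)"
proof -
  have "continuous_on (sphere 0 1) (\<lambda>x. x \<bullet> (A *v x))"
    by (rule continuous_on_inner[OF continuous_on_id linear_continuous_on[OF matrix_vector_mul_bounded_linear]])
  moreover have "sphere (0::real^'n) 1 \<noteq> {}" by simp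
  ultimately obtain x0 where x0: "x0 \<in> sphere 0 1"
    and min: "\<And>y. y \<in> sphere 0 1 \<Longrightarrow> x0 \<bullet> (A *v x0) \<le> y \<bullet> (A *v y)"
    using continuous_attains_inf[OF compact_sphere] by blast
  have "(x0 \<bullet> (A *v x0)) * (norm x)\<^sup>2 \<le> x \<bullet> (A *v x)" for x
  proof (cases "x = 0")
    case False
    then have "x0 \<bullet> (A *v x0) \<le> ((1 / norm x) *\<^sub>R x) \<bullet> (A *v ((1 / norm x) *\<^sub>R x))"
      by (intro min) simp
    also have "\<dots> = (x \<bullet> (A *v x)) / (norm x)\<^sup>2"
      unfolding quadratic_form_scaleR by (simp add: power_one_over)
    finally show ?thesis
      using False by (simp add: pos_le_divide_eq)
  qed simp
  then show ?thesis using x0 that by simp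
qed

lemma Min_eigenvalues_symmetric:
  fixes A :: "real^'n^'n"
  assumes sym: "transpose A = A"
  shows "Min (eigenvalues A) * (norm x)\<^sup>2 \<le> x \<bullet> (A *v x)"
    and "\<exists>v. norm v = 1 \<and> v \<bullet> (A *v v) = Min (eigenvalues A)"
proof -
  obtain x0 where x0: "norm x0 = 1"
    and min: "\<And>x. (x0 \<bullet> (A *v x0)) * (norm x)\<^sup>2 \<le> x \<bullet> (A *v x)"
    using rayleigh_minimizer_exists by blast
  have "x0 \<bullet> (A *v x0) \<in> eigenvalues A"
    using rayleigh_minimizer_eigenvector[OF sym x0 min] x0
    unfolding eigenvalues_def by (intro CollectI exI[of _ x0]) auto
  moreover have "x0 \<bullet> (A *v x0) \<le> c" if c: "c \<in> eigenvalues A" for c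
  proof -
    obtain v where "norm v = 1" "v \<bullet> (A *v v) = c"
      using eigenvalue_rayleigh_quotient[OF c] .
    then show ?thesis using min[of v] by simp
  qed
  ultimately have "Min (eigenvalues A) = x0 \<bullet> (A *v x0)"
    using finite_eigenvalues_symmetric[OF sym] by (intro Min_eqI) auto
  then show "Min (eigenvalues A) * (norm x)\<^sup>2 \<le> x \<bullet> (A *v x)"
    and "\<exists>v. norm v = 1 \<and> v \<bullet> (A *v v) = Min (eigenvalues A)"
    using min x0 by auto
qed

lemma Max_eigenvalues_symmetric_eqI:
  fixes A :: "real^'n^'n"
  assumes sym: "transpose A = A" and "c \<in> eigenvalues A"
    and "\<And>x. x \<bullet> (A *v x) \<le> c * (norm x)\<^sup>2"
  shows "Max (eigenvalues A) = c"
proof (rule Max_eqI)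
  show "finite (eigenvalues A)" by (rule finite_eigenvalues_symmetric[OF sym])
  show "c' \<le> c" if c': "c' \<in> eigenvalues A" for c'
  proof -
    obtain v where "norm v = 1" "v \<bullet> (A *v v) = c'"
      using eigenvalue_rayleigh_quotient[OF c'] .
    then show ?thesis using assms(3)[of v] by simp
  qed
qed fact

section \<open>Spectrum of a regular graph\<close>

lemma adj_matrix_nth [simp]: "adj_matrix E $ i $ j = of_bool (E i j)"
  by (simp add: adj_matrix_def)

lemma transpose_adj_matrix:
  assumes "simple_graph E"
  shows "transpose (adj_matrix E) = adj_matrix E"
  using assms by (auto simp: transpose_def simple_graph_def vec_eq_iff)

lemma regular_adj_matrix_mult_ones:
  fixes E :: "'a::finite \<Rightarrow> 'a \<Rightarrow> bool"
  assumes "\<And>i. card {j. E i j} = d"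
  shows "adj_matrix E *v (\<chi> i. 1) = real d *\<^sub>R (\<chi> i. 1)"
  using assms by (simp add: vec_eq_iff matrix_vector_mult_def)

lemma regular_graph_sum_squares:
  fixes E :: "'a::finite \<Rightarrow> 'a \<Rightarrow> bool"
  assumes sg: "simple_graph E" and reg: "\<And>i. card {j. E i j} = d"
  shows "(\<Sum>i\<in>UNIV. \<Sum>j\<in>UNIV. of_bool (E i j) * (x $ i + s * x $ j)\<^sup>2)
       = (1 + s\<^sup>2) * real d * (norm x)\<^sup>2 + 2 * s * (x \<bullet> (adj_matrix E *v x))"
proof -
  have row: "(\<Sum>i\<in>UNIV. \<Sum>j\<in>UNIV. of_bool (E i j) * (x $ i)\<^sup>2) = real d * (norm x)\<^sup>2"
    by (simp add: norm_vec_power2 sum_distrib_left flip: sum_distrib_right) (simp add: reg)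
  have "(\<Sum>i\<in>UNIV. \<Sum>j\<in>UNIV. of_bool (E i j) * (x $ j)\<^sup>2)
      = (\<Sum>j\<in>UNIV. \<Sum>i\<in>UNIV. of_bool (E i j) * (x $ j)\<^sup>2)"
    by (rule sum.swap)
  also have "\<dots> = (\<Sum>j\<in>UNIV. \<Sum>i\<in>UNIV. of_bool (E j i) * (x $ j)\<^sup>2)"
    using sg unfolding simple_graph_def by (intro sum.cong refl) auto
  also have "\<dots> = real d * (norm x)\<^sup>2" by (rule row)
  finally have col: "(\<Sum>i\<in>UNIV. \<Sum>j\<in>UNIV. of_bool (E i j) * (x $ j)\<^sup>2) = real d * (norm x)\<^sup>2" .
  have "(\<Sum>i\<in>UNIV. \<Sum>j\<in>UNIV. of_bool (E i j) * (x $ i + s * x $ j)\<^sup>2)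
      = (\<Sum>i\<in>UNIV. \<Sum>j\<in>UNIV. of_bool (E i j) * (x $ i)\<^sup>2)
        + 2 * s * (\<Sum>i\<in>UNIV. \<Sum>j\<in>UNIV. of_bool (E i j) * (x $ i * x $ j))
        + s\<^sup>2 * (\<Sum>i\<in>UNIV. \<Sum>j\<in>UNIV. of_bool (E i j) * (x $ j)\<^sup>2)"
    by (simp add: sum.distrib sum_distrib_left power2_sum algebra_simps del: sum_of_bool_mult_eq)
  then show ?thesis
    by (simp add: row col inner_matrix_vector_mult algebra_simps del: sum_of_bool_mult_eq)
qed

lemma regular_graph_quadratic_form_bound:
  fixes E :: "'a::finite \<Rightarrow> 'a \<Rightarrow> bool"
  assumes sg: "simple_graph E" and reg: "\<And>i. card {j. E i j} = d"
  shows "\<bar>x \<bullet> (adj_matrix E *v x)\<bar> \<le> real d * (norm x)\<^sup>2"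
proof -
  have "0 \<le> 2 * real d * (norm x)\<^sup>2 + 2 * s * (x \<bullet> (adj_matrix E *v x))" if "s\<^sup>2 = 1" for s
  proof -
    have "0 \<le> (\<Sum>i\<in>UNIV. \<Sum>j\<in>UNIV. of_bool (E i j) * (x $ i + s * x $ j)\<^sup>2)"
      by (intro sum_nonneg) simp
    then show ?thesis
      unfolding regular_graph_sum_squares[OF sg reg] that by simp
  qed
  from this[of 1] this[of "-1"] show ?thesis by (simp add: abs_le_iff)
qed

lemma vertex_transitive_degree_eq:
  assumes "vertex_transitive E"
  shows "card {j. E i j} = card {j. E k j}"
proof -
  obtain f where "graph_aut E f" "f i = k"
    using assms unfolding vertex_transitive_def by blast
  then have f: "bij f" "\<And>x y. E x y \<longleftrightarrow> E (f x) (f y)" "f i = k"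
    unfolding graph_aut_def by auto
  have "f ` {j. E i j} = {j. E k j}"
    using f by (auto simp: image_iff) (metis bij_pointE)
  then show ?thesis
    using card_image inj_on_subset[OF bij_is_inj[OF f(1)]] by (metis subset_UNIV)
qed

lemma adj_quadratic_form_edge:
  fixes E :: "'a::finite \<Rightarrow> 'a \<Rightarrow> bool"
  assumes sg: "simple_graph E" and ab: "E a b"
  shows "(axis a 1 - axis b 1) \<bullet> (adj_matrix E *v (axis a 1 - axis b 1)) = -2"
    and "(norm (axis a 1 - axis b 1 :: real^'a))\<^sup>2 = 2"
proof -
  have "a \<noteq> b" "E b a" "\<not> E a a" "\<not> E b b"
    using sg ab unfolding simple_graph_def by auto
  then show "(axis a 1 - axis b 1) \<bullet> (adj_matrix E *v (axis a 1 - axis b 1)) = -2"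
    by (simp add: matrix_vector_mult_diff_distrib matrix_vector_mult_basis
        inner_diff_left inner_diff_right inner_axis' column_def ab)
  show "(norm (axis a 1 - axis b 1 :: real^'a))\<^sup>2 = 2"
    using \<open>a \<noteq> b\<close> unfolding power2_norm_eq_inner
    by (simp add: inner_diff_left inner_diff_right inner_axis_axis)
qed

lemma regular_graph_lambda_max:
  fixes E :: "'a::finite \<Rightarrow> 'a \<Rightarrow> bool"
  assumes sg: "simple_graph E" and reg: "\<And>i. card {j. E i j} = d"
  shows "lambda_max E = real d"
  unfolding lambda_max_def
proof (rule Max_eigenvalues_symmetric_eqI[OF transpose_adj_matrix[OF sg]])
  show "real d \<in> eigenvalues (adj_matrix E)"
    unfolding eigenvalues_def
    by (intro CollectI exI[of _ "\<chi> i. 1"]) (simp add: regular_adj_matrix_mult_ones[OF reg] vec_eq_iff)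
  show "x \<bullet> (adj_matrix E *v x) \<le> real d * (norm x)\<^sup>2" for x
    using regular_graph_quadratic_form_bound[OF sg reg, of x] by (simp add: abs_le_iff)
qed

lemma lambda_min_le_rayleigh:
  assumes "simple_graph E"
  shows "lambda_min E * (norm x)\<^sup>2 \<le> x \<bullet> (adj_matrix E *v x)"
  unfolding lambda_min_def by (rule Min_eigenvalues_symmetric(1)[OF transpose_adj_matrix[OF assms]])

lemma lambda_min_attained:
  assumes "simple_graph E"
  obtains x where "norm x = 1" "x \<bullet> (adj_matrix E *v x) = lambda_min E"
  using Min_eigenvalues_symmetric(2)[OF transpose_adj_matrix[OF assms]]
  unfolding lambda_min_def by blast

lemma regular_graph_lambda_min_bounds:
  fixes E :: "'a::finite \<Rightarrow> 'a \<Rightarrow> bool"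
  assumes sg: "simple_graph E" and reg: "\<And>i. card {j. E i j} = d" and ab: "E a b"
  shows "- real d \<le> lambda_min E" "lambda_min E \<le> -1"
proof -
  obtain x :: "real^'a" where "norm x = 1" "x \<bullet> (adj_matrix E *v x) = lambda_min E"
    using lambda_min_attained[OF sg] by blast
  then show "- real d \<le> lambda_min E"
    using regular_graph_quadratic_form_bound[OF sg reg, of x] by simp
  show "lambda_min E \<le> -1"
    using lambda_min_le_rayleigh[OF sg, of "axis a 1 - axis b 1"] adj_quadratic_form_edge[OF sg ab]
    by simp
qed

section \<open>Lower bound for vector colourings\<close>

lemma sum_quadratic_form_ge:
  fixes A :: "real^'n^'n" and u :: "'n \<Rightarrow> real^'k"
  assumes "\<And>x. m * (norm x)\<^sup>2 \<le> x \<bullet> (A *v x)"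
  shows "m * (\<Sum>i\<in>UNIV. (norm (u i))\<^sup>2) \<le> (\<Sum>i\<in>UNIV. \<Sum>j\<in>UNIV. A $ i $ j * (u i \<bullet> u j))"
proof -
  define y :: "'k \<Rightarrow> real^'n" where "y k = (\<chi> i. u i $ k)" for k
  have "(\<Sum>i\<in>UNIV. (norm (u i))\<^sup>2) = (\<Sum>i\<in>UNIV. \<Sum>k\<in>UNIV. (u i $ k)\<^sup>2)"
    by (simp add: norm_vec_power2)
  also have "\<dots> = (\<Sum>k\<in>UNIV. (norm (y k))\<^sup>2)"
    by (subst sum.swap) (simp add: norm_vec_power2 y_def)
  finally have "m * (\<Sum>i\<in>UNIV. (norm (u i))\<^sup>2) = (\<Sum>k\<in>UNIV. m * (norm (y k))\<^sup>2)"
    by (simp add: sum_distrib_left)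
  also have "\<dots> \<le> (\<Sum>k\<in>UNIV. y k \<bullet> (A *v y k))"
    by (intro sum_mono assms)
  also have "\<dots> = (\<Sum>k\<in>UNIV. \<Sum>i\<in>UNIV. \<Sum>j\<in>UNIV. A $ i $ j * (u i $ k * u j $ k))"
    by (simp add: inner_matrix_vector_mult y_def)
  also have "\<dots> = (\<Sum>i\<in>UNIV. \<Sum>j\<in>UNIV. \<Sum>k\<in>UNIV. A $ i $ j * (u i $ k * u j $ k))"
    by (subst sum.swap) (subst (2) sum.swap, rule refl)
  also have "\<dots> = (\<Sum>i\<in>UNIV. \<Sum>j\<in>UNIV. A $ i $ j * (u i \<bullet> u j))"
    by (simp add: inner_vec_def sum_distrib_left)
  finally show ?thesis .
qed

lemma vector_coloring_lower_bound:
  fixes E :: "'a::finite \<Rightarrow> 'a \<Rightarrow> bool"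
  assumes reg: "\<And>i. card {j. E i j} = d"
    and rayleigh: "\<And>x. m * (norm x)\<^sup>2 \<le> x \<bullet> (adj_matrix E *v x)" and "m < 0"
    and "2 \<le> t" and col: "vector_coloring E t u"
  shows "1 - real d / m \<le> t"
proof -
  define w where "w = - 1 / (t - 1)"
  have unit: "norm (u i) = 1" and edge: "E i j \<Longrightarrow> u i \<bullet> u j \<le> w" for i j
    using col unfolding vector_coloring_def w_def by auto
  have "m * CARD('a) = m * (\<Sum>i\<in>UNIV. (norm (u i))\<^sup>2)"
    by (simp add: unit)
  also have "\<dots> \<le> (\<Sum>i\<in>UNIV. \<Sum>j\<in>UNIV. of_bool (E i j) * (u i \<bullet> u j))"
    using sum_quadratic_form_ge[OF rayleigh, of u] by simp
  also have "\<dots> \<le> (\<Sum>i\<in>UNIV. \<Sum>j\<in>UNIV. of_bool (E i j) * w)"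
    by (intro sum_mono) (auto simp: edge)
  also have "\<dots> = CARD('a) * (real d * w)"
    by (simp add: reg)
  finally have "m \<le> real d * w"
    by simp
  then show ?thesis
    using \<open>m < 0\<close> \<open>2 \<le> t\<close> by (simp add: w_def field_simps)
qed

section \<open>Averaging over the automorphism group\<close>

lemma graph_aut_id: "graph_aut E id"
  by (simp add: graph_aut_def)

lemma graph_aut_comp: "graph_aut E f \<Longrightarrow> graph_aut E g \<Longrightarrow> graph_aut E (f \<circ> g)"
  unfolding graph_aut_def by (auto intro: bij_comp)

lemma graph_aut_inv: "graph_aut E f \<Longrightarrow> graph_aut E (inv f)"
  unfolding graph_aut_def by (metis bij_imp_bij_inv bij_inv_eq_iff)

lemma norm_vec_permute_power2:
  fixes x :: "real^'n"
  assumes "bij f"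
  shows "(norm (\<chi> i. x $ f i))\<^sup>2 = (norm x)\<^sup>2"
  using sum.reindex_bij_betw[OF assms, of "\<lambda>i. (x $ i)\<^sup>2"] by (simp add: norm_vec_power2)

lemma graph_aut_quadratic_form:
  fixes E :: "'a::finite \<Rightarrow> 'a \<Rightarrow> bool"
  assumes "graph_aut E f"
  shows "(\<chi> i. x $ f i) \<bullet> (adj_matrix E *v (\<chi> i. x $ f i)) = x \<bullet> (adj_matrix E *v x)"
proof -
  have f: "bij f" "\<And>i j. E (f i) (f j) \<longleftrightarrow> E i j"
    using assms unfolding graph_aut_def by auto
  have "(\<chi> i. x $ f i) \<bullet> (adj_matrix E *v (\<chi> i. x $ f i))
      = (\<Sum>i\<in>UNIV. \<Sum>j\<in>UNIV. of_bool (E (f i) (f j)) * (x $ f i * x $ f j))"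
    by (simp add: inner_matrix_vector_mult f(2) del: sum_of_bool_mult_eq)
  also have "\<dots> = (\<Sum>i\<in>UNIV. \<Sum>j\<in>UNIV. of_bool (E (f i) j) * (x $ f i * x $ j))"
    by (intro sum.cong refl sum.reindex_bij_betw[OF f(1)])
  also have "\<dots> = (\<Sum>i\<in>UNIV. \<Sum>j\<in>UNIV. of_bool (E i j) * (x $ i * x $ j))"
    by (rule sum.reindex_bij_betw[OF f(1)])
  also have "\<dots> = x \<bullet> (adj_matrix E *v x)"
    by (simp add: inner_matrix_vector_mult del: sum_of_bool_mult_eq)
  finally show ?thesis .
qed

definition aut_orbit_vector :: "('a::finite \<Rightarrow> 'a \<Rightarrow> bool) \<Rightarrow> real^'a \<Rightarrow> 'a \<Rightarrow> real^('a \<Rightarrow> 'a)" where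
  "aut_orbit_vector E x i = (\<chi> f. if graph_aut E f then x $ f i else 0)"

lemma inner_aut_orbit_vector:
  "aut_orbit_vector E x i \<bullet> aut_orbit_vector E x j = (\<Sum>f | graph_aut E f. x $ f i * x $ f j)"
  unfolding aut_orbit_vector_def inner_vec_def by (simp add: if_distrib sum.If_cases cong: if_cong)

lemma inner_aut_orbit_vector_aut_invariant:
  assumes g: "graph_aut E g"
  shows "aut_orbit_vector E x (g i) \<bullet> aut_orbit_vector E x (g j)
       = aut_orbit_vector E x i \<bullet> aut_orbit_vector E x j"
proof -
  have "bij g" using g unfolding graph_aut_def by simp
  then have "inv g \<circ> g = id" "g \<circ> inv g = id"
    using bij_is_surj[of g] by (simp_all add: bij_is_inj surj_iff)
  then have "bij_betw (\<lambda>f. f \<circ> g) {f. graph_aut E f} {f. graph_aut E f}"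
    by (intro bij_betwI[where g = "\<lambda>f. f \<circ> inv g"])
      (auto simp: g graph_aut_comp graph_aut_inv comp_assoc)
  from sum.reindex_bij_betw[OF this, of "\<lambda>f. x $ f i * x $ f j"] show ?thesis
    by (simp add: inner_aut_orbit_vector)
qed

lemma sum_norm_aut_orbit_vector:
  fixes E :: "'a::finite \<Rightarrow> 'a \<Rightarrow> bool"
  shows "(\<Sum>i\<in>UNIV. (norm (aut_orbit_vector E x i))\<^sup>2) = card {f. graph_aut E f} * (norm x)\<^sup>2"
proof -
  have "(\<Sum>i\<in>UNIV. (norm (aut_orbit_vector E x i))\<^sup>2)
      = (\<Sum>i\<in>UNIV. \<Sum>f | graph_aut E f. (x $ f i)\<^sup>2)"
    unfolding power2_norm_eq_inner inner_aut_orbit_vector by (simp add: power2_eq_square)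
  also have "\<dots> = (\<Sum>f | graph_aut E f. (norm (\<chi> i. x $ f i))\<^sup>2)"
    by (subst sum.swap) (simp add: norm_vec_power2)
  also have "\<dots> = (\<Sum>f | graph_aut E f. (norm x)\<^sup>2)"
    by (intro sum.cong refl norm_vec_permute_power2) (simp add: graph_aut_def)
  finally show ?thesis by simp
qed

lemma sum_adj_inner_aut_orbit_vector:
  fixes E :: "'a::finite \<Rightarrow> 'a \<Rightarrow> bool"
  shows "(\<Sum>i\<in>UNIV. \<Sum>j\<in>UNIV. of_bool (E i j) * (aut_orbit_vector E x i \<bullet> aut_orbit_vector E x j))
       = card {f. graph_aut E f} * (x \<bullet> (adj_matrix E *v x))"
proof -
  have "(\<Sum>i\<in>UNIV. \<Sum>j\<in>UNIV. of_bool (E i j) * (aut_orbit_vector E x i \<bullet> aut_orbit_vector E x j))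
      = (\<Sum>i\<in>UNIV. \<Sum>j\<in>UNIV. \<Sum>f | graph_aut E f. of_bool (E i j) * (x $ f i * x $ f j))"
    by (simp add: inner_aut_orbit_vector sum_distrib_left del: sum_of_bool_mult_eq)
  also have "\<dots> = (\<Sum>f | graph_aut E f. \<Sum>i\<in>UNIV. \<Sum>j\<in>UNIV. of_bool (E i j) * (x $ f i * x $ f j))"
    by (subst sum.swap) (subst (2) sum.swap, rule refl)
  also have "\<dots> = (\<Sum>f | graph_aut E f. (\<chi> i. x $ f i) \<bullet> (adj_matrix E *v (\<chi> i. x $ f i)))"
    by (simp add: inner_matrix_vector_mult del: sum_of_bool_mult_eq)
  also have "\<dots> = (\<Sum>f | graph_aut E f. x \<bullet> (adj_matrix E *v x))"
    by (intro sum.cong refl graph_aut_quadratic_form) simp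
  finally show ?thesis by simp
qed

lemma transitive_graph_invariant_kernel:
  assumes vt: "vertex_transitive E" and et: "edge_transitive E" and ab: "E a b"
    and inv: "\<And>g i j. graph_aut E g \<Longrightarrow> K (g i) (g j) = K i j"
    and sym: "\<And>i j. K i j = K j i"
  shows "K i i = K a a" and "E i j \<Longrightarrow> K i j = K a b"
proof -
  obtain g where "graph_aut E g" "g a = i"
    using vt unfolding vertex_transitive_def by blast
  then show "K i i = K a a" using inv by metis
  assume "E i j"
  then obtain g where g: "graph_aut E g" "{g a, g b} = {i, j}"
    using et ab unfolding edge_transitive_def by blast
  then have "(g a = i \<and> g b = j) \<or> (g a = j \<and> g b = i)"
    by (auto simp: doubleton_eq_iff)
  then show "K i j = K a b"
    using inv[OF g(1), of a b] sym by metis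
qed

lemma gram_realization:
  fixes w :: "'a::finite \<Rightarrow> 'v::euclidean_space"
  obtains u :: "'a \<Rightarrow> real^'a" where "\<And>i j. u i \<bullet> u j = w i \<bullet> w j"
proof -
  define S where "S = span (range w)"
  have "dim S \<le> card (range w)"
    unfolding S_def by (rule dim_le_card) auto
  also have "\<dots> \<le> dim (UNIV :: (real^'a) set)"
    using card_image_le[of UNIV w] by simp
  finally obtain \<phi> :: "'v \<Rightarrow> real^'a"
    where "linear \<phi>" and isometric: "\<And>x. x \<in> S \<Longrightarrow> norm (\<phi> x) = norm x"
    using isometry_subset_subspace[OF subspace_span subspace_UNIV] unfolding S_def by metis
  have "\<phi> (w i) \<bullet> \<phi> (w j) = w i \<bullet> w j" for i j
  proof -
    have "w i \<in> S" "w j \<in> S" "w i - w j \<in> S"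
      unfolding S_def by (simp_all add: span_base span_diff)
    moreover have "\<phi> (w i) - \<phi> (w j) = \<phi> (w i - w j)"
      by (simp add: linear_diff[OF \<open>linear \<phi>\<close>])
    ultimately show ?thesis
      using isometric by (simp add: dot_norm_neg)
  qed
  then show ?thesis by (rule that)
qed

lemma strict_vector_coloring_of_gram:
  fixes w :: "'a::finite \<Rightarrow> 'v::euclidean_space"
  assumes diag: "\<And>i. w i \<bullet> w i = \<alpha>" and "\<alpha> > 0"
    and edge: "\<And>i j. E i j \<Longrightarrow> w i \<bullet> w j = \<beta>" and "\<beta> \<noteq> 0"
  shows "\<exists>u. strict_vector_coloring E (1 - \<alpha> / \<beta>) u"
proof -
  obtain u' :: "'a \<Rightarrow> real^'a" where u': "\<And>i j. u' i \<bullet> u' j = w i \<bullet> w j"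
    using gram_realization by blast
  define u where "u i = (1 / sqrt \<alpha>) *\<^sub>R u' i" for i
  have uu: "u i \<bullet> u j = (w i \<bullet> w j) / \<alpha>" for i j
  proof -
    have "u i \<bullet> u j = (1 / sqrt \<alpha>)\<^sup>2 * (w i \<bullet> w j)"
      by (simp add: u_def u' power2_eq_square)
    also have "\<dots> = (w i \<bullet> w j) / \<alpha>"
      using \<open>\<alpha> > 0\<close> by (simp add: power_divide)
    finally show ?thesis .
  qed
  have "norm (u i) = 1" for i
    using \<open>\<alpha> > 0\<close> by (simp add: norm_eq_sqrt_inner uu diag)
  moreover have "u i \<bullet> u j = - 1 / ((1 - \<alpha> / \<beta>) - 1)" if "E i j" for i j
    using \<open>\<alpha> > 0\<close> \<open>\<beta> \<noteq> 0\<close> by (simp add: uu edge[OF that] field_simps)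
  ultimately show ?thesis
    unfolding strict_vector_coloring_def by blast
qed

lemma transitive_graph_aut_orbit_gram:
  fixes E :: "'a::finite \<Rightarrow> 'a \<Rightarrow> bool" and x :: "real^'a"
  assumes vt: "vertex_transitive E" and et: "edge_transitive E" and ab: "E a b"
    and reg: "\<And>i. card {j. E i j} = d" and "norm x = 1"
  obtains \<alpha> \<beta> where "\<alpha> > 0" and "real d * \<beta> = \<alpha> * (x \<bullet> (adj_matrix E *v x))"
    and "\<And>i. aut_orbit_vector E x i \<bullet> aut_orbit_vector E x i = \<alpha>"
    and "\<And>i j. E i j \<Longrightarrow> aut_orbit_vector E x i \<bullet> aut_orbit_vector E x j = \<beta>"
proof -
  define N where "N = card {f. graph_aut E f}"
  define K where "K i j = aut_orbit_vector E x i \<bullet> aut_orbit_vector E x j" for i j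
  have "N > 0"
    using graph_aut_id[of E] unfolding N_def by (auto simp: card_gt_0_iff)
  have diag: "K i i = K a a" and edge: "E i j \<Longrightarrow> K i j = K a b" for i j
    using transitive_graph_invariant_kernel[OF vt et ab, of K]
    by (simp_all add: K_def inner_aut_orbit_vector_aut_invariant inner_commute)
  have "(norm (aut_orbit_vector E x i))\<^sup>2 = K a a" for i
    using diag[of i] by (simp add: K_def power2_norm_eq_inner)
  then have Kaa: "CARD('a) * K a a = N"
    using sum_norm_aut_orbit_vector[of E x] \<open>norm x = 1\<close> by (simp add: N_def)
  have "of_bool (E i j) * K i j = of_bool (E i j) * K a b" for i j
    using edge[of i j] by (cases "E i j") simp_all
  then have Kab: "CARD('a) * (real d * K a b) = N * (x \<bullet> (adj_matrix E *v x))"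
    using sum_adj_inner_aut_orbit_vector[of E x] reg by (simp add: K_def N_def)
  have "0 < real CARD('a) * K a a"
    using Kaa \<open>N > 0\<close> by simp
  then have "K a a > 0"
    by (simp add: zero_less_mult_iff)
  moreover have "real d * K a b = K a a * (x \<bullet> (adj_matrix E *v x))"
  proof -
    have "CARD('a) * (real d * K a b) = CARD('a) * (K a a * (x \<bullet> (adj_matrix E *v x)))"
      using Kaa Kab by (simp add: mult.assoc[symmetric])
    then show ?thesis by simp
  qed
  ultimately show ?thesis
    using that diag edge unfolding K_def by blast
qed

lemma transitive_graph_strict_vector_coloring:
  fixes E :: "'a::finite \<Rightarrow> 'a \<Rightarrow> bool" and x :: "real^'a"
  assumes vt: "vertex_transitive E" and et: "edge_transitive E" and ab: "E a b"
    and reg: "\<And>i. card {j. E i j} = d"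
    and "norm x = 1" and neg: "x \<bullet> (adj_matrix E *v x) < 0"
  shows "\<exists>u. strict_vector_coloring E (1 - real d / (x \<bullet> (adj_matrix E *v x))) u"
proof -
  obtain \<alpha> \<beta> where "\<alpha> > 0" and d\<beta>: "real d * \<beta> = \<alpha> * (x \<bullet> (adj_matrix E *v x))"
    and diag: "\<And>i. aut_orbit_vector E x i \<bullet> aut_orbit_vector E x i = \<alpha>"
    and edge: "\<And>i j. E i j \<Longrightarrow> aut_orbit_vector E x i \<bullet> aut_orbit_vector E x j = \<beta>"
    using transitive_graph_aut_orbit_gram[OF vt et ab reg \<open>norm x = 1\<close>] by blast
  have "\<beta> \<noteq> 0"
    using d\<beta> \<open>\<alpha> > 0\<close> neg by auto
  have "\<alpha> / \<beta> = real d / (x \<bullet> (adj_matrix E *v x))"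
    using d\<beta> \<open>\<beta> \<noteq> 0\<close> neg by (simp add: field_simps)
  then show ?thesis
    using strict_vector_coloring_of_gram[OF diag \<open>\<alpha> > 0\<close> edge \<open>\<beta> \<noteq> 0\<close>] by simp
qed

lemma vector_chromatic_eqI:
  assumes "2 \<le> T" and "strict_vector_coloring E T u"
    and lower: "\<And>t v. 2 \<le> t \<Longrightarrow> vector_coloring E t v \<Longrightarrow> T \<le> t"
  shows "vector_chromatic E = T" and "strict_vector_chromatic E = T"
proof -
  have relax: "strict_vector_coloring E t v \<Longrightarrow> vector_coloring E t v" for t v
    by (simp add: strict_vector_coloring_def vector_coloring_def)
  show "vector_chromatic E = T"
    unfolding vector_chromatic_def by (rule cInf_eq_minimum) (use assms relax in blast)+
  show "strict_vector_chromatic E = T"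
    unfolding strict_vector_chromatic_def by (rule cInf_eq_minimum) (use assms relax in blast)+
qed

theorem mainTheorem12:
  fixes E :: "'a::finite \<Rightarrow> 'a \<Rightarrow> bool"
  assumes "simple_graph E"
    and "\<exists>x y. E x y"
    and "vertex_transitive E"
    and "edge_transitive E"
  shows "vector_chromatic E = 1 - lambda_max E / lambda_min E
       \<and> strict_vector_chromatic E = 1 - lambda_max E / lambda_min E"
proof -
  note sg = assms(1) and vt = assms(3) and et = assms(4)
  obtain a b where ab: "E a b" using assms(2) by blast
  define d where "d = card {j. E a j}"
  have reg: "card {j. E i j} = d" for i
    unfolding d_def by (rule vertex_transitive_degree_eq[OF vt])
  have lmax: "lambda_max E = real d"
    by (rule regular_graph_lambda_max[OF sg reg])
  have "- real d \<le> lambda_min E" "lambda_min E \<le> -1"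
    by (rule regular_graph_lambda_min_bounds[OF sg reg ab])+
  then have "2 \<le> 1 - real d / lambda_min E" and "lambda_min E < 0"
    by (simp_all add: field_simps)
  obtain x :: "real^'a" where x: "norm x = 1" "x \<bullet> (adj_matrix E *v x) = lambda_min E"
    using lambda_min_attained[OF sg] by blast
  then obtain u where "strict_vector_coloring E (1 - real d / lambda_min E) u"
    using transitive_graph_strict_vector_coloring[OF vt et ab reg x(1)] \<open>lambda_min E < 0\<close> by auto
  moreover have "1 - real d / lambda_min E \<le> t" if "2 \<le> t" "vector_coloring E t v" for t v
    using vector_coloring_lower_bound[OF reg lambda_min_le_rayleigh[OF sg] \<open>lambda_min E < 0\<close> that] .
  ultimately show ?thesis
    using vector_chromatic_eqI[OF \<open>2 \<le> 1 - real d / lambda_min E\<close>] unfolding lmax by blast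
qed

end
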